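(* The standard unit sphere $S^n$ is $\Phi$-SSU if and only if $n>4$.
   Context: A Riemannian $n$-manifold $N$ is $\Phi$-SSU if there is an isometric immersion $N\to\mathbb R^q$ with second fundamental form $\mathsf B$ such that for every $y\in N$ and every unit $\mathsf x\in T_yN$, $\sum_{\beta=1}^n\big(4|\mathsf B(\mathsf x,\mathsf e_\beta)|^2-\langle \mathsf B(\mathsf x,\mathsf x),\mathsf B(\mathsf e_\beta,\mathsf e_\beta)\rangle\big)<0$, where $\{\mathsf e_\beta\}$ is an orthonormal basis of $T_yN$. *)

theory Defs
  imports "HOL-Analysis.Analysis"
begin

text \<open>The unit sphere S^n is modelled as sphere 0 1 in real^'n, with n = CARD('n) - 1.
  Euclidean space R^q is modelled by vectors nat => real whose coordinates j < q are used
  (everything is truncated to zero at coordinates j >= q).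
  A smooth map f : S^n -> R^q is represented by its radial (degree-0 homogeneous)
  extension F to real^'n - {0}, given coordinatewise by F j.\<close>

definition qinner :: "nat \<Rightarrow> (nat \<Rightarrow> real) \<Rightarrow> (nat \<Rightarrow> real) \<Rightarrow> real" where
  "qinner q a b = (\<Sum>j<q. a j * b j)"

definition dF :: "nat \<Rightarrow> (nat \<Rightarrow> real^'n \<Rightarrow> real) \<Rightarrow> real^'n \<Rightarrow> real^'n \<Rightarrow> nat \<Rightarrow> real" where
  "dF q F y v = (\<lambda>j. if j < q then frechet_derivative (F j) (at y) v else 0)"

definition d2F :: "nat \<Rightarrow> (nat \<Rightarrow> real^'n \<Rightarrow> real) \<Rightarrow> real^'n \<Rightarrow> real^'n \<Rightarrow> real^'n \<Rightarrow> nat \<Rightarrow> real" where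
  "d2F q F y u v = (\<lambda>j. if j < q then
      frechet_derivative (\<lambda>x. frechet_derivative (F j) (at x) v) (at y) u else 0)"

definition tangent_image :: "nat \<Rightarrow> (nat \<Rightarrow> real^'n \<Rightarrow> real) \<Rightarrow> real^'n \<Rightarrow> (nat \<Rightarrow> real) set" where
  "tangent_image q F y = {dF q F y v | v. v \<bullet> y = 0}"

definition orth_proj :: "nat \<Rightarrow> (nat \<Rightarrow> real) set \<Rightarrow> (nat \<Rightarrow> real) \<Rightarrow> nat \<Rightarrow> real" where
  "orth_proj q W w = (THE p. p \<in> W \<and> (\<forall>u\<in>W. qinner q (\<lambda>j. w j - p j) u = 0))"

text \<open>Second fundamental form: normal component of the second derivative.  Since the
  extension is homogeneous of degree 0, the Gauss-formula correction term vanishes.\<close>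
definition sff :: "nat \<Rightarrow> (nat \<Rightarrow> real^'n \<Rightarrow> real) \<Rightarrow> real^'n \<Rightarrow> real^'n \<Rightarrow> real^'n \<Rightarrow> nat \<Rightarrow> real" where
  "sff q F y u v = (let w = d2F q F y u v in (\<lambda>j. w j - orth_proj q (tangent_image q F y) w j))"

fun iter_dd :: "(real^'n) list \<Rightarrow> (real^'n \<Rightarrow> real) \<Rightarrow> real^'n \<Rightarrow> real" where
  "iter_dd [] g = g"
| "iter_dd (v # vs) g = (\<lambda>x. frechet_derivative (iter_dd vs g) (at x) v)"

definition smooth_on :: "(real^'n) set \<Rightarrow> (real^'n \<Rightarrow> real) \<Rightarrow> bool" where
  "smooth_on S g \<longleftrightarrow> (\<forall>vs. iter_dd vs g differentiable_on S)"

definition isometric_immersion_sphere :: "nat \<Rightarrow> (nat \<Rightarrow> real^'n \<Rightarrow> real) \<Rightarrow> bool" where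
  "isometric_immersion_sphere q F \<longleftrightarrow>
     (\<forall>j<q. smooth_on (- {0}) (F j) \<and> (\<forall>x t. x \<noteq> 0 \<longrightarrow> t > 0 \<longrightarrow> F j (t *\<^sub>R x) = F j x))
   \<and> (\<forall>y\<in>sphere 0 1. \<forall>v. v \<bullet> y = 0 \<longrightarrow> qinner q (dF q F y v) (dF q F y v) = v \<bullet> v)"

definition Phi_SSU_sphere :: "'n::finite itself \<Rightarrow> bool" where
  "Phi_SSU_sphere _ \<longleftrightarrow>
    (\<exists>q (F :: nat \<Rightarrow> real^'n \<Rightarrow> real). isometric_immersion_sphere q F \<and>
      (\<forall>y\<in>sphere 0 1. \<forall>x. x \<bullet> y = 0 \<and> norm x = 1 \<longrightarrow>
        (\<forall>e :: nat \<Rightarrow> real^'n.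
           (\<forall>\<beta><CARD('n) - 1. \<forall>\<gamma><CARD('n) - 1. e \<beta> \<bullet> e \<gamma> = (if \<beta> = \<gamma> then 1 else 0)) \<and>
           (\<forall>\<beta><CARD('n) - 1. e \<beta> \<bullet> y = 0) \<longrightarrow>
           (\<Sum>\<beta><CARD('n) - 1.
               4 * qinner q (sff q F y x (e \<beta>)) (sff q F y x (e \<beta>))
             - qinner q (sff q F y x x) (sff q F y (e \<beta>) (e \<beta>))) < 0)))"

end

theory Submission
  imports Defs
begin

text \<open>For n \<le> 4 the condition fails at every point of every isometric immersion. Summing
  \<Phi>(e_a) over an orthonormal tangent frame e_1, ..., e_n gives
  4 sum_(a,b) |B(e_a,e_b)|^2 - |sum_a B(e_a,e_a)|^2, which is not negative because, by Cauchy-Schwarz,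
  |sum_a B(e_a,e_a)|^2 \<le> n sum_a |B(e_a,e_a)|^2 \<le> 4 sum_(a,b) |B(e_a,e_b)|^2.
  For n > 4 the standard embedding S^n \<subseteq> R^(n+1) has second fundamental form
  B(u,v) = -\<langle>u,v\<rangle> y at y, hence \<Phi>(x) = 4 sum_b \<langle>x,e_b\<rangle>^2 - n \<le> 4 - n < 0 by Bessel's inequality.\<close>

section \<open>Nonexistence for n \<le> 4\<close>

lemma qinner_self_nonneg: "0 \<le> qinner q a a"
  unfolding qinner_def by (intro sum_nonneg) auto

lemma qinner_sum_sum:
  "qinner q (\<lambda>j. \<Sum>\<alpha><n. a \<alpha> j) (\<lambda>j. \<Sum>\<beta><m. b \<beta> j) = (\<Sum>\<alpha><n. \<Sum>\<beta><m. qinner q (a \<alpha>) (b \<beta>))"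
  unfolding qinner_def sum_product by (simp add: sum.swap[of _ "{..<q}"])

lemma qinner_sum_self_le:
  fixes n :: nat
  shows "qinner q (\<lambda>j. \<Sum>\<alpha><n. a \<alpha> j) (\<lambda>j. \<Sum>\<alpha><n. a \<alpha> j) \<le> real n * (\<Sum>\<alpha><n. qinner q (a \<alpha>) (a \<alpha>))"
proof -
  have "qinner q (\<lambda>j. \<Sum>\<alpha><n. a \<alpha> j) (\<lambda>j. \<Sum>\<alpha><n. a \<alpha> j) = (\<Sum>j<q. (\<Sum>\<alpha><n. a \<alpha> j)\<^sup>2)"
    by (simp add: qinner_def power2_eq_square)
  also have "\<dots> \<le> (\<Sum>j<q. (\<Sum>\<alpha><n. (a \<alpha> j)\<^sup>2) * real n)"
    using sum_squared_le_sum_of_squares[of "\<lambda>\<alpha>. a \<alpha> _" "{..<n}"] by (intro sum_mono) simp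
  also have "\<dots> = real n * (\<Sum>\<alpha><n. qinner q (a \<alpha>) (a \<alpha>))"
    by (simp add: qinner_def power2_eq_square sum_distrib_left sum_distrib_right mult.commute
        sum.swap[of _ "{..<q}"])
  finally show ?thesis .
qed

lemma Phi_double_sum_nonneg:
  fixes n :: nat and B :: "nat \<Rightarrow> nat \<Rightarrow> nat \<Rightarrow> real"
  assumes "n \<le> 4"
  shows "0 \<le> (\<Sum>\<alpha><n. \<Sum>\<beta><n. 4 * qinner q (B \<alpha> \<beta>) (B \<alpha> \<beta>) - qinner q (B \<alpha> \<alpha>) (B \<beta> \<beta>))"
proof -
  have "(\<Sum>\<alpha><n. \<Sum>\<beta><n. qinner q (B \<alpha> \<alpha>) (B \<beta> \<beta>))
      = qinner q (\<lambda>j. \<Sum>\<alpha><n. B \<alpha> \<alpha> j) (\<lambda>j. \<Sum>\<alpha><n. B \<alpha> \<alpha> j)"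
    by (rule qinner_sum_sum[symmetric])
  also have "\<dots> \<le> real n * (\<Sum>\<alpha><n. qinner q (B \<alpha> \<alpha>) (B \<alpha> \<alpha>))"
    by (rule qinner_sum_self_le)
  also have "\<dots> \<le> 4 * (\<Sum>\<alpha><n. qinner q (B \<alpha> \<alpha>) (B \<alpha> \<alpha>))"
    using assms by (intro mult_right_mono sum_nonneg qinner_self_nonneg) auto
  also have "\<dots> \<le> 4 * (\<Sum>\<alpha><n. \<Sum>\<beta><n. qinner q (B \<alpha> \<beta>) (B \<alpha> \<beta>))"
    by (intro mult_left_mono sum_mono member_le_sum[where f = "\<lambda>\<beta>. qinner q (B _ \<beta>) (B _ \<beta>)"]
        qinner_self_nonneg) auto
  finally show ?thesis
    by (simp add: sum_subtractf sum_distrib_left)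
qed

lemma sphere_orthonormal_frame:
  obtains y :: "real^'n::finite" and e :: "nat \<Rightarrow> real^'n"
  where "y \<in> sphere 0 1"
    and "\<forall>\<beta><CARD('n) - 1. \<forall>\<gamma><CARD('n) - 1. e \<beta> \<bullet> e \<gamma> = (if \<beta> = \<gamma> then 1 else 0)"
    and "\<forall>\<beta><CARD('n) - 1. e \<beta> \<bullet> y = 0"
proof -
  fix k :: 'n
  have "card (UNIV - {k}) = CARD('n) - 1"
    by (simp add: card_Diff_singleton)
  then obtain h where h: "bij_betw h {..<CARD('n) - 1} (UNIV - {k})"
    by (metis atLeast0LessThan ex_bij_betw_nat_finite finite)
  then have "h \<beta> \<noteq> k" and "inj_on h {..<CARD('n) - 1}" if "\<beta> < CARD('n) - 1" for \<beta>
    using that by (auto simp: bij_betw_def)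
  then show ?thesis
    by (intro that[of "axis k 1" "\<lambda>\<beta>. axis (h \<beta>) 1"])
      (auto simp: inner_axis_axis inj_on_def)
qed

lemma Phi_SSU_sphere_imp_dim_gt_4:
  assumes "CARD('n::finite) \<ge> 2" and "Phi_SSU_sphere TYPE('n)"
  shows "CARD('n) - 1 > 4"
proof (rule ccontr)
  assume "\<not> CARD('n) - 1 > 4"
  then have n_le_4: "CARD('n) - 1 \<le> 4" by simp
  obtain q and F :: "nat \<Rightarrow> real^'n \<Rightarrow> real" where Phi_neg:
    "\<forall>y\<in>sphere 0 1. \<forall>x. x \<bullet> y = 0 \<and> norm x = 1 \<longrightarrow>
        (\<forall>e :: nat \<Rightarrow> real^'n.
           (\<forall>\<beta><CARD('n) - 1. \<forall>\<gamma><CARD('n) - 1. e \<beta> \<bullet> e \<gamma> = (if \<beta> = \<gamma> then 1 else 0)) \<and>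
           (\<forall>\<beta><CARD('n) - 1. e \<beta> \<bullet> y = 0) \<longrightarrow>
           (\<Sum>\<beta><CARD('n) - 1.
               4 * qinner q (sff q F y x (e \<beta>)) (sff q F y x (e \<beta>))
             - qinner q (sff q F y x x) (sff q F y (e \<beta>) (e \<beta>))) < 0)"
    using assms(2) unfolding Phi_SSU_sphere_def by blast
  obtain y :: "real^'n" and e where y: "y \<in> sphere 0 1"
    and e: "\<forall>\<beta><CARD('n) - 1. \<forall>\<gamma><CARD('n) - 1. e \<beta> \<bullet> e \<gamma> = (if \<beta> = \<gamma> then 1 else 0)"
      "\<forall>\<beta><CARD('n) - 1. e \<beta> \<bullet> y = 0"
    by (rule sphere_orthonormal_frame)
  let ?B = "\<lambda>\<alpha> \<beta>. sff q F y (e \<alpha>) (e \<beta>)"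
  have "(\<Sum>\<alpha><CARD('n) - 1. \<Sum>\<beta><CARD('n) - 1.
      4 * qinner q (?B \<alpha> \<beta>) (?B \<alpha> \<beta>) - qinner q (?B \<alpha> \<alpha>) (?B \<beta> \<beta>)) < (\<Sum>\<alpha><CARD('n) - 1. 0)"
  proof (rule sum_strict_mono)
    show "{..<CARD('n) - 1} \<noteq> {}"
      using assms(1) by (simp add: lessThan_empty_iff)
  next
    fix \<alpha> assume "\<alpha> \<in> {..<CARD('n) - 1}"
    with e have "e \<alpha> \<bullet> y = 0 \<and> norm (e \<alpha>) = 1"
      by (auto simp: norm_eq_sqrt_inner)
    with Phi_neg y e show "(\<Sum>\<beta><CARD('n) - 1.
        4 * qinner q (?B \<alpha> \<beta>) (?B \<alpha> \<beta>) - qinner q (?B \<alpha> \<alpha>) (?B \<beta> \<beta>)) < 0"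
      by blast
  qed simp
  with Phi_double_sum_nonneg[OF n_le_4, of q ?B] show False
    by simp
qed

section \<open>Calculus of x / |x|\<close>

text \<open>Functions that away from the origin are polynomials in linear forms and 1/|x|. The rule
  \<open>cong\<close> is needed because directional derivatives are only determined away from the origin.\<close>

inductive inv_norm_poly :: "(real^'n \<Rightarrow> real) \<Rightarrow> bool" where
  const: "inv_norm_poly (\<lambda>x. c)"
| inner: "inv_norm_poly (\<lambda>x. x \<bullet> a)"
| inverse_norm: "inv_norm_poly (\<lambda>x. inverse (norm x))"
| add: "inv_norm_poly f \<Longrightarrow> inv_norm_poly g \<Longrightarrow> inv_norm_poly (\<lambda>x. f x + g x)"
| mult: "inv_norm_poly f \<Longrightarrow> inv_norm_poly g \<Longrightarrow> inv_norm_poly (\<lambda>x. f x * g x)"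
| cong: "inv_norm_poly f \<Longrightarrow> (\<And>x. x \<noteq> 0 \<Longrightarrow> g x = f x) \<Longrightarrow> inv_norm_poly g"

lemma inv_norm_poly_has_derivative:
  fixes f :: "real^'n \<Rightarrow> real"
  assumes "inv_norm_poly f"
  shows "\<exists>D. (\<forall>x. x \<noteq> 0 \<longrightarrow> (f has_derivative D x) (at x)) \<and> (\<forall>v. inv_norm_poly (\<lambda>x. D x v))"
  using assms
proof induction
  case (const c)
  have "((\<lambda>x. c) has_derivative (\<lambda>v. 0)) (at x)" for x :: "real^'n"
    by simp
  then show ?case
    by (intro exI[of _ "\<lambda>x v. 0"]) (auto intro: inv_norm_poly.const)
next
  case (inner a)
  have "((\<lambda>x. x \<bullet> a) has_derivative (\<lambda>v. v \<bullet> a)) (at x)" for x :: "real^'n"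
    by (auto intro!: derivative_eq_intros)
  then show ?case
    by (intro exI[of _ "\<lambda>x v. v \<bullet> a"]) (auto intro: inv_norm_poly.const)
next
  case inverse_norm
  let ?D = "\<lambda>x v. (x \<bullet> - v) * inverse (norm x) * inverse (norm x) * inverse (norm x)"
  have "((\<lambda>x. inverse (norm x)) has_derivative ?D x) (at x)" if "x \<noteq> 0" for x :: "real^'n"
  proof -
    have "((\<lambda>x. inverse (norm x)) has_derivative
        (\<lambda>v. - (inverse (norm x) * (v \<bullet> sgn x) * inverse (norm x)))) (at x)"
      using that by (intro Deriv.has_derivative_inverse has_derivative_norm) auto
    moreover have "(\<lambda>v. - (inverse (norm x) * (v \<bullet> sgn x) * inverse (norm x))) = ?D x"
      by (auto simp: sgn_div_norm inner_commute field_simps)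
    ultimately show ?thesis by simp
  qed
  moreover have "inv_norm_poly (\<lambda>x. ?D x v)" for v :: "real^'n"
    by (intro inv_norm_poly.mult inv_norm_poly.inner inv_norm_poly.inverse_norm)
  ultimately show ?case
    by (intro exI[of _ ?D]) blast
next
  case (add f g)
  then obtain Df Dg where
    "\<forall>x. x \<noteq> 0 \<longrightarrow> (f has_derivative Df x) (at x)" "\<forall>v. inv_norm_poly (\<lambda>x. Df x v)"
    "\<forall>x. x \<noteq> 0 \<longrightarrow> (g has_derivative Dg x) (at x)" "\<forall>v. inv_norm_poly (\<lambda>x. Dg x v)"
    by blast
  then show ?case
    by (intro exI[of _ "\<lambda>x v. Df x v + Dg x v"])
      (simp add: has_derivative_add inv_norm_poly.add)
next
  case (mult f g)
  then obtain Df Dg where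
    "\<forall>x. x \<noteq> 0 \<longrightarrow> (f has_derivative Df x) (at x)" "\<forall>v. inv_norm_poly (\<lambda>x. Df x v)"
    "\<forall>x. x \<noteq> 0 \<longrightarrow> (g has_derivative Dg x) (at x)" "\<forall>v. inv_norm_poly (\<lambda>x. Dg x v)"
    by blast
  with mult.hyps show ?case
    by (intro exI[of _ "\<lambda>x v. f x * Dg x v + Df x v * g x"])
      (simp add: has_derivative_mult inv_norm_poly.add inv_norm_poly.mult)
next
  case (cong f g)
  then obtain D where D: "\<forall>x. x \<noteq> 0 \<longrightarrow> (f has_derivative D x) (at x)"
    and "\<forall>v. inv_norm_poly (\<lambda>x. D x v)"
    by blast
  moreover have "(g has_derivative D x) (at x)" if "x \<noteq> 0" for x
    using has_derivative_transform_within_open[of f "D x" x UNIV "- {0}" g] D cong.hyps(2) that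
    by auto
  ultimately show ?case
    by (intro exI[of _ D]) blast
qed

lemma inv_norm_poly_frechet_derivative:
  fixes f :: "real^'n \<Rightarrow> real"
  assumes "inv_norm_poly f"
  shows "inv_norm_poly (\<lambda>x. frechet_derivative f (at x) v)"
proof -
  obtain D where D: "\<forall>x. x \<noteq> 0 \<longrightarrow> (f has_derivative D x) (at x)"
    and D_poly: "inv_norm_poly (\<lambda>x. D x v)"
    using inv_norm_poly_has_derivative[OF assms] by blast
  show ?thesis
  proof (rule inv_norm_poly.cong[OF D_poly])
    fix x :: "real^'n"
    assume "x \<noteq> 0"
    then show "frechet_derivative f (at x) v = D x v"
      using D frechet_derivative_at by metis
  qed
qed

lemma inv_norm_poly_iter_dd: "inv_norm_poly f \<Longrightarrow> inv_norm_poly (iter_dd vs f)"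
  by (induction vs) (simp_all add: inv_norm_poly_frechet_derivative)

lemma smooth_on_inv_norm_poly:
  fixes f :: "real^'n \<Rightarrow> real"
  assumes "inv_norm_poly f"
  shows "smooth_on (- {0}) f"
  unfolding smooth_on_def differentiable_on_def
proof (intro allI ballI)
  fix vs and x :: "real^'n"
  assume "x \<in> - {0}"
  obtain D where "\<forall>x. x \<noteq> 0 \<longrightarrow> (iter_dd vs f has_derivative D x) (at x)"
    using inv_norm_poly_has_derivative[OF inv_norm_poly_iter_dd[OF assms]] by blast
  with \<open>x \<in> - {0}\<close> show "iter_dd vs f differentiable at x within - {0}"
    by (auto intro: has_derivative_at_withinI simp: differentiable_def)
qed

lemma has_derivative_norm_inner:
  fixes x :: "'a::real_inner"
  assumes "x \<noteq> 0"
  shows "(norm has_derivative (\<lambda>v. (x \<bullet> v) / norm x)) (at x)"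
proof -
  have "(\<lambda>v. v \<bullet> sgn x) = (\<lambda>v. (x \<bullet> v) / norm x)"
    by (simp add: sgn_div_norm inner_commute divide_inverse mult.commute)
  with has_derivative_norm[OF assms] show ?thesis
    by simp
qed

lemma has_derivative_inner_div_norm:
  fixes a x :: "'a::real_inner"
  assumes "x \<noteq> 0"
  shows "((\<lambda>x. (x \<bullet> a) / norm x) has_derivative
    (\<lambda>v. (v \<bullet> a) / norm x - (x \<bullet> a) * (x \<bullet> v) / norm x ^ 3)) (at x)"
  using assms
  by (auto intro!: derivative_eq_intros has_derivative_norm_inner simp: field_simps power3_eq_cube)

lemma has_derivative_inner_div_norm_directional:
  fixes a v x :: "'a::real_inner"
  assumes "x \<noteq> 0"
  shows "((\<lambda>x. (v \<bullet> a) / norm x - (x \<bullet> a) * (x \<bullet> v) / norm x ^ 3) has_derivative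
    (\<lambda>u. - (v \<bullet> a) * (x \<bullet> u) / norm x ^ 3
         - ((u \<bullet> a) * (x \<bullet> v) + (x \<bullet> a) * (u \<bullet> v)) / norm x ^ 3
         + 3 * (x \<bullet> a) * (x \<bullet> v) * (x \<bullet> u) / norm x ^ 5)) (at x)"
  using assms
  by (auto intro!: derivative_eq_intros has_derivative_norm_inner
      simp: fun_eq_iff field_simps eval_nat_numeral)

lemma frechet_derivative_inner_div_norm:
  fixes a v x :: "'a::real_inner"
  assumes "x \<noteq> 0"
  shows "frechet_derivative (\<lambda>x. (x \<bullet> a) / norm x) (at x) v
    = (v \<bullet> a) / norm x - (x \<bullet> a) * (x \<bullet> v) / norm x ^ 3"
proof -
  have "frechet_derivative (\<lambda>x. (x \<bullet> a) / norm x) (at x)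
    = (\<lambda>v. (v \<bullet> a) / norm x - (x \<bullet> a) * (x \<bullet> v) / norm x ^ 3)"
    by (rule frechet_derivative_at[OF has_derivative_inner_div_norm[OF assms], symmetric])
  then show ?thesis
    by simp
qed

lemma second_frechet_derivative_inner_div_norm_sphere:
  fixes a u v y :: "'a::real_inner"
  assumes "norm y = 1" and "u \<bullet> y = 0" and "v \<bullet> y = 0"
  shows "frechet_derivative (\<lambda>x. frechet_derivative (\<lambda>x. (x \<bullet> a) / norm x) (at x) v) (at y) u
    = - (u \<bullet> v) * (y \<bullet> a)"
proof -
  have "y \<noteq> 0"
    using assms(1) by auto
  have "((\<lambda>x. frechet_derivative (\<lambda>x. (x \<bullet> a) / norm x) (at x) v) has_derivative
    (\<lambda>u. - (v \<bullet> a) * (y \<bullet> u) / norm y ^ 3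
         - ((u \<bullet> a) * (y \<bullet> v) + (y \<bullet> a) * (u \<bullet> v)) / norm y ^ 3
         + 3 * (y \<bullet> a) * (y \<bullet> v) * (y \<bullet> u) / norm y ^ 5)) (at y)"
    using has_derivative_inner_div_norm_directional[OF \<open>y \<noteq> 0\<close>]
    by (rule has_derivative_transform_within_open[where s = "- {0}"])
      (use \<open>y \<noteq> 0\<close> in \<open>auto simp: frechet_derivative_inner_div_norm\<close>)
  from frechet_derivative_at[OF this, symmetric] show ?thesis
    using assms by (simp add: inner_commute)
qed

section \<open>The standard embedding\<close>

definition coord_enum :: "nat \<Rightarrow> 'n::finite" where
  "coord_enum = (SOME g. bij_betw g {..<CARD('n)} UNIV)"

lemma bij_betw_coord_enum: "bij_betw (coord_enum :: nat \<Rightarrow> 'n::finite) {..<CARD('n)} UNIV"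
proof -
  have "\<exists>g :: nat \<Rightarrow> 'n. bij_betw g {..<CARD('n)} UNIV"
    using ex_bij_betw_nat_finite[of "UNIV :: 'n set"] by (simp add: atLeast0LessThan)
  then show ?thesis
    unfolding coord_enum_def by (rule someI_ex)
qed

definition coords :: "real^'n::finite \<Rightarrow> nat \<Rightarrow> real" where
  "coords z j = (if j < CARD('n) then z $ coord_enum j else 0)"

lemma qinner_coords: "qinner CARD('n) (coords z) (coords w) = z \<bullet> (w :: real^'n::finite)"
proof -
  have "qinner CARD('n) (coords z) (coords w) = (\<Sum>j<CARD('n). z $ coord_enum j * w $ coord_enum j)"
    by (simp add: qinner_def coords_def)
  also have "\<dots> = (\<Sum>i\<in>UNIV. z $ i * w $ i)"
    using sum.reindex_bij_betw[OF bij_betw_coord_enum] by simp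
  finally show ?thesis
    by (simp add: inner_vec_def)
qed

lemma coords_vanish: "j \<ge> CARD('n) \<Longrightarrow> coords (z :: real^'n::finite) j = 0"
  by (simp add: coords_def)

definition sphere_embedding :: "nat \<Rightarrow> real^'n::finite \<Rightarrow> real" where
  "sphere_embedding j x = coords (sgn x) j"

lemma sphere_embedding_eq:
  "j < CARD('n) \<Longrightarrow> sphere_embedding j = (\<lambda>x :: real^'n::finite. (x \<bullet> axis (coord_enum j) 1) / norm x)"
  by (simp add: fun_eq_iff sphere_embedding_def coords_def sgn_div_norm inner_axis divide_inverse
      mult.commute)

lemma dF_sphere_embedding:
  fixes y v :: "real^'n::finite"
  assumes "norm y = 1" and "v \<bullet> y = 0"
  shows "dF CARD('n) sphere_embedding y v = coords v"
proof -
  have "y \<noteq> 0"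
    using assms(1) by auto
  with assms show ?thesis
    by (simp add: fun_eq_iff dF_def coords_def sphere_embedding_eq frechet_derivative_inner_div_norm,
        simp add: inner_axis inner_commute)
qed

lemma d2F_sphere_embedding:
  fixes y u v :: "real^'n::finite"
  assumes "norm y = 1" and "u \<bullet> y = 0" and "v \<bullet> y = 0"
  shows "d2F CARD('n) sphere_embedding y u v = coords (- (u \<bullet> v) *\<^sub>R y)"
  using assms
  by (simp add: fun_eq_iff d2F_def coords_def sphere_embedding_eq
      second_frechet_derivative_inner_div_norm_sphere, simp add: inner_axis)

lemma tangent_image_sphere_embedding:
  fixes y :: "real^'n::finite"
  assumes "norm y = 1"
  shows "tangent_image CARD('n) sphere_embedding y = coords ` {v. v \<bullet> y = 0}"
  using assms by (force simp: tangent_image_def dF_sphere_embedding)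

lemma orth_proj_orthogonal:
  assumes "(\<lambda>j. 0) \<in> W" and "\<forall>u\<in>W. qinner q w u = 0" and "\<forall>u\<in>W. \<forall>j\<ge>q. u j = 0"
  shows "orth_proj q W w = (\<lambda>j. 0)"
  unfolding orth_proj_def
proof (rule the_equality)
  show "(\<lambda>j. 0) \<in> W \<and> (\<forall>u\<in>W. qinner q (\<lambda>j. w j - 0) u = 0)"
    using assms(1,2) by simp
next
  fix p
  assume p: "p \<in> W \<and> (\<forall>u\<in>W. qinner q (\<lambda>j. w j - p j) u = 0)"
  then have "qinner q p p = 0"
    using assms(2) by (auto simp: qinner_def sum_subtractf left_diff_distrib)
  then have "p j = 0" if "j < q" for j
    using that by (auto simp: qinner_def sum_nonneg_eq_0_iff)
  with p assms(3) show "p = (\<lambda>j. 0)"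
    by (metis not_le)
qed

lemma sff_sphere_embedding:
  fixes y u v :: "real^'n::finite"
  assumes "norm y = 1" and "u \<bullet> y = 0" and "v \<bullet> y = 0"
  shows "sff CARD('n) sphere_embedding y u v = coords (- (u \<bullet> v) *\<^sub>R y)"
proof -
  have "orth_proj CARD('n) (coords ` {v. v \<bullet> y = 0}) (coords (- (u \<bullet> v) *\<^sub>R y)) = (\<lambda>j. 0)"
  proof (rule orth_proj_orthogonal)
    show "(\<lambda>j. 0) \<in> coords ` {v. v \<bullet> y = 0}"
      by (rule image_eqI[of _ _ 0]) (auto simp: coords_def)
  qed (auto simp: qinner_coords coords_vanish inner_commute)
  then show ?thesis
    using assms by (simp add: sff_def d2F_sphere_embedding tangent_image_sphere_embedding)
qed

lemma isometric_immersion_sphere_embedding: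
  "isometric_immersion_sphere CARD('n) (sphere_embedding :: nat \<Rightarrow> real^'n::finite \<Rightarrow> real)"
  unfolding isometric_immersion_sphere_def
proof (intro conjI allI impI ballI)
  fix j :: nat
  assume "j < CARD('n)"
  have "inv_norm_poly (\<lambda>x :: real^'n. (x \<bullet> axis (coord_enum j) 1) * inverse (norm x))"
    by (intro inv_norm_poly.mult inv_norm_poly.inner inv_norm_poly.inverse_norm)
  then show "smooth_on (- {0}) (sphere_embedding j :: real^'n \<Rightarrow> real)"
    using \<open>j < CARD('n)\<close> by (simp add: sphere_embedding_eq divide_inverse smooth_on_inv_norm_poly)
next
  fix j and x :: "real^'n" and t :: real
  assume "t > 0"
  then show "sphere_embedding j (t *\<^sub>R x) = sphere_embedding j x"
    by (simp add: sphere_embedding_def sgn_scaleR)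
next
  fix y v :: "real^'n"
  assume "y \<in> sphere 0 1" and "v \<bullet> y = 0"
  then show "qinner CARD('n) (dF CARD('n) sphere_embedding y v) (dF CARD('n) sphere_embedding y v) = v \<bullet> v"
    by (simp add: dF_sphere_embedding qinner_coords)
qed

lemma sum_inner_orthonormal_sq_le:
  fixes e :: "nat \<Rightarrow> 'a::real_inner"
  assumes "\<forall>\<beta><n. \<forall>\<gamma><n. e \<beta> \<bullet> e \<gamma> = (if \<beta> = \<gamma> then 1 else 0)"
  shows "(\<Sum>\<beta><n. (x \<bullet> e \<beta>)\<^sup>2) \<le> x \<bullet> x"
proof -
  define p where "p = (\<Sum>\<beta><n. (x \<bullet> e \<beta>) *\<^sub>R e \<beta>)"
  have xp: "x \<bullet> p = (\<Sum>\<beta><n. (x \<bullet> e \<beta>)\<^sup>2)"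
    by (simp add: p_def inner_sum_right power2_eq_square)
  have "p \<bullet> p = (\<Sum>\<beta><n. \<Sum>\<gamma><n. (x \<bullet> e \<beta>) * (x \<bullet> e \<gamma>) * (e \<gamma> \<bullet> e \<beta>))"
    by (simp add: p_def inner_sum_right inner_sum_left sum_distrib_left mult.assoc)
  also have "\<dots> = (\<Sum>\<beta><n. \<Sum>\<gamma><n. if \<gamma> = \<beta> then (x \<bullet> e \<beta>)\<^sup>2 else 0)"
    using assms by (intro sum.cong) (auto simp: power2_eq_square)
  also have "\<dots> = x \<bullet> p"
    by (simp add: xp)
  finally have "p \<bullet> p = x \<bullet> p" .
  moreover have "0 \<le> (x - p) \<bullet> (x - p)"
    by simp
  ultimately show ?thesis
    using xp by (simp add: inner_diff inner_commute)
qed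

lemma Phi_SSU_sphere_if_dim_gt_4:
  assumes "CARD('n::finite) - 1 > 4"
  shows "Phi_SSU_sphere TYPE('n)"
  unfolding Phi_SSU_sphere_def
proof (intro exI conjI ballI allI impI)
  show "isometric_immersion_sphere CARD('n) (sphere_embedding :: nat \<Rightarrow> real^'n \<Rightarrow> real)"
    by (rule isometric_immersion_sphere_embedding)
next
  fix y x :: "real^'n" and e :: "nat \<Rightarrow> real^'n"
  assume y: "y \<in> sphere 0 1" and x: "x \<bullet> y = 0 \<and> norm x = 1"
    and e: "(\<forall>\<beta><CARD('n) - 1. \<forall>\<gamma><CARD('n) - 1. e \<beta> \<bullet> e \<gamma> = (if \<beta> = \<gamma> then 1 else 0)) \<and>
      (\<forall>\<beta><CARD('n) - 1. e \<beta> \<bullet> y = 0)"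
  let ?B = "sff CARD('n) (sphere_embedding :: nat \<Rightarrow> real^'n \<Rightarrow> real) y"
  have "y \<bullet> y = 1" and "x \<bullet> x = 1"
    using x y by (simp_all add: dot_square_norm)
  then have "4 * qinner CARD('n) (?B x (e \<beta>)) (?B x (e \<beta>)) - qinner CARD('n) (?B x x) (?B (e \<beta>) (e \<beta>))
      = 4 * (x \<bullet> e \<beta>)\<^sup>2 - 1" if "\<beta> < CARD('n) - 1" for \<beta>
    using x y e that by (simp add: sff_sphere_embedding qinner_coords power2_eq_square)
  then have "(\<Sum>\<beta><CARD('n) - 1.
      4 * qinner CARD('n) (?B x (e \<beta>)) (?B x (e \<beta>)) - qinner CARD('n) (?B x x) (?B (e \<beta>) (e \<beta>)))
      = 4 * (\<Sum>\<beta><CARD('n) - 1. (x \<bullet> e \<beta>)\<^sup>2) - real (CARD('n) - 1)"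
    by (simp add: sum_subtractf sum_distrib_left)
  also have "\<dots> \<le> 4 - real (CARD('n) - 1)"
    using sum_inner_orthonormal_sq_le[of "CARD('n) - 1" e x] e \<open>x \<bullet> x = 1\<close> by simp
  also have "\<dots> < 0"
    using assms by simp
  finally show "(\<Sum>\<beta><CARD('n) - 1.
      4 * qinner CARD('n) (?B x (e \<beta>)) (?B x (e \<beta>)) - qinner CARD('n) (?B x x) (?B (e \<beta>) (e \<beta>))) < 0" .
qed

theorem corollary5p2:
  assumes "CARD('n::finite) \<ge> 2"
  shows "Phi_SSU_sphere TYPE('n) \<longleftrightarrow> CARD('n) - 1 > 4"
  using Phi_SSU_sphere_imp_dim_gt_4[OF assms] Phi_SSU_sphere_if_dim_gt_4 by blast

end
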